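(* Let $q$ be a prime power and let $L\subseteq\{0,1,\ldots,q-1\}$. If $\mathcal{F}\subseteq2^{[n]}$ is a $q$-modular $L$-avoiding $L$-intersecting system, then $$|\mathcal{F}|\le\sum_{i=0}^{q-1}\binom{n}{i}.$$
   Context: For $L\subseteq\{0,\ldots,q-1\}$, $\mathcal{F}\subseteq2^{[n]}$ is $q$-modular $L$-intersecting if for all distinct $A,B\in\mathcal{F}$, $|A\cap B|\equiv\ell\pmod q$ for some $\ell\in L$, and $q$-modular $L$-avoiding if for every $A\in\mathcal{F}$, $|A|\not\equiv\ell\pmod q$ for all $\ell\in L$. *)

theory Defs
  imports "HOL-Computational_Algebra.Primes"
begin

definition prime_power :: "nat \<Rightarrow> bool" where
  "prime_power q \<longleftrightarrow> (\<exists>p k. prime (p::nat) \<and> k \<ge> 1 \<and> q = p ^ k)"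

definition modular_L_intersecting :: "nat \<Rightarrow> nat set \<Rightarrow> nat set set \<Rightarrow> bool" where
  "modular_L_intersecting q L F \<longleftrightarrow>
     (\<forall>A\<in>F. \<forall>B\<in>F. A \<noteq> B \<longrightarrow> (\<exists>l\<in>L. card (A \<inter> B) mod q = l mod q))"

definition modular_L_avoiding :: "nat \<Rightarrow> nat set \<Rightarrow> nat set set \<Rightarrow> bool" where
  "modular_L_avoiding q L F \<longleftrightarrow>
     (\<forall>A\<in>F. \<forall>l\<in>L. card A mod q \<noteq> l mod q)"

end

theory Submission
  imports Defs Complex_Main "HOL-Library.Function_Algebras" "HOL-Number_Theory.Cong"
begin

text \<open>Let \<open>q = p ^ k\<close> and let \<open>c\<close> be the integers with
  \<open>G x = (\<Sum>i<q. c i * (x choose i))\<close> equal to \<open>1\<close> for \<open>x \<in> {0..<q} - L\<close> and \<open>0\<close> on \<open>L\<close>.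
  Since \<open>(x + q) choose i \<equiv> x choose i (mod p)\<close> for \<open>i < q\<close>, the two hypotheses give
  \<open>G |A \<inter> B| \<equiv> [A = B] (mod p)\<close> for \<open>A, B \<in> F\<close>. Counting the subsets of \<open>A \<inter> B\<close> by size,
  \<open>G |A \<inter> B| = (\<Sum>S. [S \<subseteq> A] * c |S| * [S \<subseteq> B])\<close>, the sum ranging over the subsets \<open>S\<close>
  of \<open>[n]\<close> with \<open>|S| < q\<close>. So the inclusion matrix \<open>M\<close> of \<open>F\<close> against these sets satisfies
  \<open>M W M\<^sup>T \<equiv> I (mod p)\<close> for a diagonal integer matrix \<open>W\<close>. Then no nontrivial integer
  (hence no rational) combination of the rows of \<open>M\<close> vanishes, and \<open>|F|\<close> is at most the
  number of columns, \<open>\<Sum>i<q. n choose i\<close>.\<close>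

lemma prime_dvd_prime_power_choose:
  assumes p: "prime (p::nat)" and j: "0 < j" "j < p ^ k"
  shows "p dvd (p ^ k choose j)"
proof (rule ccontr)
  assume np: "\<not> p dvd (p ^ k choose j)"
  obtain j' where j': "j = Suc j'" using j by (cases j) auto
  obtain m where m: "p ^ k = Suc m" using j by (cases "p ^ k") auto
  have "j * (p ^ k choose j) = p ^ k * (m choose j')"
    using Suc_times_binomial[of j' m] j' m by simp
  then have "p ^ k dvd j * (p ^ k choose j)" by simp
  moreover have "coprime (p ^ k) (p ^ k choose j)"
    using np p by (simp add: prime_imp_coprime)
  ultimately have "p ^ k dvd j" using coprime_dvd_mult_left_iff by blast
  with j show False using dvd_imp_le by fastforce
qed

text \<open>By Vandermonde's identity the shift by \<open>p ^ k\<close> only adds multiples of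
  \<open>p ^ k choose j\<close> with \<open>0 < j \<le> i\<close>.\<close>
lemma choose_add_prime_power_cong:
  assumes p: "prime (p::nat)" and i: "i < p ^ k"
  shows "[(x + p ^ k) choose i = x choose i] (mod p)"
proof -
  have "(x + p ^ k) choose i = (\<Sum>j\<le>i. (p ^ k choose j) * (x choose (i - j)))"
    using vandermonde[of "p ^ k" x i] by (simp add: add.commute)
  also have "\<dots> = (x choose i) + (\<Sum>j\<in>{1..i}. (p ^ k choose j) * (x choose (i - j)))"
    by (simp add: atMost_atLeast0 sum.atLeast_Suc_atMost)
  finally have eq: "(x + p ^ k) choose i = (x choose i) + (\<Sum>j\<in>{1..i}. (p ^ k choose j) * (x choose (i - j)))" .
  have "p dvd (\<Sum>j\<in>{1..i}. (p ^ k choose j) * (x choose (i - j)))"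
    by (rule dvd_sum) (use prime_dvd_prime_power_choose[OF p] i in auto)
  then show ?thesis
    unfolding eq by (simp add: cong_add_lcancel_0_nat cong_0_iff)
qed

lemma choose_mod_prime_power_cong:
  assumes p: "prime (p::nat)" and i: "i < p ^ k"
  shows "[x choose i = (x mod p ^ k) choose i] (mod p)"
proof -
  have "[(y + m * p ^ k) choose i = y choose i] (mod p)" for y m
  proof (induction m)
    case (Suc m)
    have "(y + Suc m * p ^ k) choose i = ((y + m * p ^ k) + p ^ k) choose i"
      by (simp add: algebra_simps)
    with choose_add_prime_power_cong[OF p i] Suc show ?case
      by (metis cong_trans)
  qed simp
  from this[of "x mod p ^ k" "x div p ^ k"] show ?thesis
    by (simp add: mod_div_mult_eq cong_sym)
qed

text \<open>The coefficients of \<open>t\<close> in the binomial basis \<open>x choose i\<close> (Newton's forward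
  difference formula), determined recursively by interpolating \<open>t\<close> at \<open>0, 1, 2, \<dots>\<close>.\<close>

function newton_coeff :: "(nat \<Rightarrow> int) \<Rightarrow> nat \<Rightarrow> int" where
  "newton_coeff t x = t x - (\<Sum>i<x. newton_coeff t i * int (x choose i))"
  by auto
termination by (relation "measure snd") auto

declare newton_coeff.simps [simp del]

lemma sum_newton_coeff_choose:
  assumes "x < q"
  shows "(\<Sum>i<q. newton_coeff t i * int (x choose i)) = t x"
proof -
  have "(\<Sum>i<q. newton_coeff t i * int (x choose i)) = (\<Sum>i<Suc x. newton_coeff t i * int (x choose i))"
    by (rule sum.mono_neutral_right) (use assms in auto)
  also have "\<dots> = newton_coeff t x + (\<Sum>i<x. newton_coeff t i * int (x choose i))"
    by simp
  also have "\<dots> = t x"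
    by (subst newton_coeff.simps[of t x]) simp
  finally show ?thesis .
qed

lemma sum_newton_coeff_choose_cong:
  assumes "prime (p::nat)"
  shows "[(\<Sum>i<p ^ k. newton_coeff t i * int (x choose i)) = t (x mod p ^ k)] (mod int p)"
proof -
  have "[(\<Sum>i<p ^ k. newton_coeff t i * int (x choose i))
       = (\<Sum>i<p ^ k. newton_coeff t i * int ((x mod p ^ k) choose i))] (mod int p)"
    using choose_mod_prime_power_cong[OF assms]
    by (intro cong_sum cong_mult cong_refl) (simp add: cong_int_iff)
  also have "(\<Sum>i<p ^ k. newton_coeff t i * int ((x mod p ^ k) choose i)) = t (x mod p ^ k)"
    using assms by (simp add: sum_newton_coeff_choose prime_gt_0_nat)
  finally show ?thesis .
qed

lemma sum_choose_card_eq_sum_subsets: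
  fixes c :: "nat \<Rightarrow> 'a::comm_semiring_1"
  assumes "finite X"
  shows "(\<Sum>i<q. c i * of_nat (card X choose i)) = (\<Sum>S | S \<subseteq> X \<and> card S < q. c (card S))"
proof -
  let ?Y = "{S. S \<subseteq> X \<and> card S < q}"
  have fin: "finite ?Y" using assms by simp
  have "(\<Sum>S\<in>?Y. c (card S)) = (\<Sum>i<q. \<Sum>S\<in>{S\<in>?Y. card S = i}. c (card S))"
    by (rule sum.group[OF fin finite_lessThan, symmetric]) auto
  also have "\<dots> = (\<Sum>i<q. \<Sum>S | S \<subseteq> X \<and> card S = i. c i)"
    by (intro sum.cong) auto
  also have "\<dots> = (\<Sum>i<q. c i * of_nat (card X choose i))"
    by (simp add: n_subsets[OF assms] mult.commute)
  finally show ?thesis ..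
qed

lemma sum_inclusion_products_eq_sum_choose:
  fixes c :: "nat \<Rightarrow> 'a::comm_semiring_1"
  assumes "finite N" "A \<subseteq> N"
  shows "(\<Sum>S | S \<subseteq> N \<and> card S < q. of_bool (S \<subseteq> A) * c (card S) * of_bool (S \<subseteq> B))
    = (\<Sum>i<q. c i * of_nat (card (A \<inter> B) choose i))"
proof -
  let ?Y = "{S. S \<subseteq> N \<and> card S < q}"
  have "(\<Sum>S\<in>?Y. of_bool (S \<subseteq> A) * c (card S) * of_bool (S \<subseteq> B))
      = (\<Sum>S\<in>?Y. if S \<subseteq> A \<inter> B then c (card S) else 0)"
    by (intro sum.cong) auto
  also have "\<dots> = (\<Sum>S\<in>{S\<in>?Y. S \<subseteq> A \<inter> B}. c (card S))"
    by (rule sum.inter_filter[symmetric]) (use assms(1) in simp)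
  also have "{S\<in>?Y. S \<subseteq> A \<inter> B} = {S. S \<subseteq> A \<inter> B \<and> card S < q}"
    using assms(2) by auto
  also have "(\<Sum>S\<in>\<dots>. c (card S)) = (\<Sum>i<q. c i * of_nat (card (A \<inter> B) choose i))"
    using assms by (intro sum_choose_card_eq_sum_subsets[symmetric]) (auto intro: finite_subset)
  finally show ?thesis .
qed

lemma card_subsets_card_less:
  assumes "finite X"
  shows "card {S. S \<subseteq> X \<and> card S < q} = (\<Sum>i<q. card X choose i)"
  using sum_choose_card_eq_sum_subsets[OF assms, where c = "\<lambda>_. 1 :: nat"] by simp

lemma common_denominator:
  fixes f :: "'a \<Rightarrow> rat"
  assumes "finite X"
  obtains D :: int and g :: "'a \<Rightarrow> int"
  where "D \<noteq> 0" "\<And>x. x \<in> X \<Longrightarrow> of_int D * f x = of_int (g x)"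
proof
  define d where "d x = snd (quotient_of (f x))" for x
  define n where "n x = fst (quotient_of (f x))" for x
  have d_pos: "d x > 0" for x
    unfolding d_def by (metis quotient_of_denom_pos prod.collapse)
  show "(\<Prod>x\<in>X. d x) \<noteq> 0"
    using prod_pos[of X d] d_pos by force
  fix x assume x: "x \<in> X"
  have "f x = of_int (n x) / of_int (d x)"
    unfolding n_def d_def by (rule quotient_of_div) simp
  then have "of_int (d x) * f x = of_int (n x)"
    using d_pos[of x] by simp
  then show "of_int (\<Prod>x\<in>X. d x) * f x = of_int (n x * (\<Prod>y\<in>X - {x}. d y))"
    by (simp add: prod.remove[OF assms x] mult_ac)
qed

lemma integer_relation_coeff_dvd:
  fixes M :: "'a \<Rightarrow> 'b \<Rightarrow> int" and w :: "'b \<Rightarrow> int"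
  assumes "finite I" "B \<in> I"
    and gram: "\<And>A. A \<in> I \<Longrightarrow> [(\<Sum>S\<in>J. M A S * w S * M B S) = of_bool (A = B)] (mod m)"
    and rel: "\<And>S. S \<in> J \<Longrightarrow> (\<Sum>A\<in>I. \<mu> A * M A S) = 0"
  shows "m dvd \<mu> B"
proof -
  have "(\<Sum>A\<in>I. \<mu> A * (\<Sum>S\<in>J. M A S * w S * M B S))
      = (\<Sum>A\<in>I. \<Sum>S\<in>J. w S * M B S * (\<mu> A * M A S))"
    by (simp add: sum_distrib_left mult_ac)
  also have "\<dots> = (\<Sum>S\<in>J. w S * M B S * (\<Sum>A\<in>I. \<mu> A * M A S))"
    by (subst sum.swap) (simp add: sum_distrib_left)
  also have "\<dots> = 0"
    using rel by simp
  finally have "0 = (\<Sum>A\<in>I. \<mu> A * (\<Sum>S\<in>J. M A S * w S * M B S))" ..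
  also have "[\<dots> = (\<Sum>A\<in>I. \<mu> A * of_bool (A = B))] (mod m)"
    using gram by (intro cong_sum cong_mult cong_refl)
  also have "(\<Sum>A\<in>I. \<mu> A * of_bool (A = B)) = \<mu> B"
    using assms(1,2) by simp
  finally show ?thesis
    by (metis cong_0_iff cong_sym)
qed

text \<open>Descent: dividing an integer relation by \<open>m\<close> gives another one, so every
  coefficient is divisible by all powers of \<open>m\<close>.\<close>

lemma integer_relation_trivial:
  fixes M :: "'a \<Rightarrow> 'b \<Rightarrow> int" and w :: "'b \<Rightarrow> int" and m :: int
  assumes "\<not> is_unit m" "finite I" "B \<in> I"
    and gram: "\<And>A B. A \<in> I \<Longrightarrow> B \<in> I \<Longrightarrow>
      [(\<Sum>S\<in>J. M A S * w S * M B S) = of_bool (A = B)] (mod m)"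
    and rel: "\<And>S. S \<in> J \<Longrightarrow> (\<Sum>A\<in>I. \<mu> A * M A S) = 0"
  shows "\<mu> B = 0"
proof -
  have "m ^ e dvd \<mu> B" for e
    using rel
  proof (induction e arbitrary: \<mu>)
    case (Suc e)
    have dvd: "m dvd \<mu> A" if "A \<in> I" for A
      using integer_relation_coeff_dvd[OF assms(2) that gram Suc.prems] that by blast
    define \<nu> where "\<nu> A = \<mu> A div m" for A
    have \<mu>: "\<mu> A = m * \<nu> A" if "A \<in> I" for A
      using dvd[OF that] unfolding \<nu>_def by simp
    have "(\<Sum>A\<in>I. \<nu> A * M A S) = 0" if "S \<in> J" for S
    proof -
      have "m * (\<Sum>A\<in>I. \<nu> A * M A S) = (\<Sum>A\<in>I. \<mu> A * M A S)"
        by (simp add: sum_distrib_left \<mu> mult.assoc)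
      with Suc.prems[OF that] show ?thesis
        by (cases "m = 0") (simp_all add: \<nu>_def)
    qed
    with Suc.IH have "m ^ e dvd \<nu> B" .
    then show ?case
      using \<mu>[OF assms(3)] by (simp add: mult_dvd_mono)
  qed simp
  show ?thesis
  proof (rule ccontr)
    assume "\<mu> B \<noteq> 0"
    then have "finite {e. m ^ e dvd \<mu> B}"
      using finite_divisor_powers assms(1) by blast
    with \<open>\<And>e. m ^ e dvd \<mu> B\<close> show False
      by simp
  qed
qed

interpretation rat_fun: vector_space "\<lambda>(r::rat) (f::'a \<Rightarrow> rat) x. r * f x"
  by unfold_locales (auto simp: fun_eq_iff algebra_simps)

lemma sum_fun_apply: "(\<Sum>x\<in>A. f x) y = (\<Sum>x\<in>A. f x y)"
  by (induction A rule: infinite_finite_induct) auto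

lemma rat_fun_in_span_indicators:
  assumes "finite J" "\<And>S. S \<notin> J \<Longrightarrow> f S = 0"
  shows "f \<in> rat_fun.span ((\<lambda>S T. of_bool (T = S)) ` J)"
proof -
  have "f = (\<Sum>S\<in>J. (\<lambda>T. f S * of_bool (T = S)))"
    using assms by (auto simp: fun_eq_iff sum_fun_apply Int_insert_right)
  also have "\<dots> \<in> rat_fun.span ((\<lambda>S T. of_bool (T = S)) ` J)"
    by (intro rat_fun.span_sum rat_fun.span_scale rat_fun.span_base) simp
  finally show ?thesis .
qed

lemma rows_eq_if_integer_relations_trivial:
  fixes M :: "'a \<Rightarrow> 'b \<Rightarrow> int"
  assumes "finite I"
    and trivial: "\<And>\<mu>. (\<And>S. S \<in> J \<Longrightarrow> (\<Sum>A\<in>I. \<mu> A * M A S) = 0) \<Longrightarrow> \<forall>A\<in>I. \<mu> A = 0"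
    and "A \<in> I" "B \<in> I" "\<And>S. S \<in> J \<Longrightarrow> M A S = M B S"
  shows "A = B"
proof (rule ccontr)
  assume "A \<noteq> B"
  define \<mu> :: "'a \<Rightarrow> int" where "\<mu> X = of_bool (X = A) - of_bool (X = B)" for X
  have "(\<Sum>X\<in>I. \<mu> X * M X S) = (\<Sum>X\<in>I. of_bool (X = A) * M X S) - (\<Sum>X\<in>I. of_bool (X = B) * M X S)" for S
    by (simp add: \<mu>_def left_diff_distrib sum_subtractf)
  also have "\<dots> S = M A S - M B S" for S
    using assms(1,3,4) by simp
  finally have "\<forall>X\<in>I. \<mu> X = 0"
    using assms(5) by (intro trivial) simp
  then have "\<mu> A = 0"
    using \<open>A \<in> I\<close> ..
  with \<open>A \<noteq> B\<close> show False
    by (simp add: \<mu>_def)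
qed

lemma card_le_if_integer_relations_trivial:
  fixes M :: "'a \<Rightarrow> 'b \<Rightarrow> int"
  assumes "finite I" "finite J"
    and trivial: "\<And>\<mu>. (\<And>S. S \<in> J \<Longrightarrow> (\<Sum>A\<in>I. \<mu> A * M A S) = 0) \<Longrightarrow> \<forall>A\<in>I. \<mu> A = 0"
  shows "card I \<le> card J"
proof -
  define v where "v A = (\<lambda>S. if S \<in> J then rat_of_int (M A S) else 0)" for A
  have inj: "inj_on v I"
  proof (rule inj_onI)
    fix A B assume "A \<in> I" "B \<in> I" "v A = v B"
    moreover have "M A S = M B S" if "S \<in> J" for S
      using fun_cong[OF \<open>v A = v B\<close>, of S] that by (simp add: v_def)
    ultimately show "A = B"
      by (intro rows_eq_if_integer_relations_trivial[OF assms(1) trivial])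
  qed
  have span: "v ` I \<subseteq> rat_fun.span ((\<lambda>S T. of_bool (T = S)) ` J)"
    unfolding v_def using \<open>finite J\<close> by (auto intro: rat_fun_in_span_indicators)
  have indep: "rat_fun.independent (v ` I)"
  proof (rule rat_fun.independent_if_scalars_zero)
    fix u w assume sum: "(\<Sum>x\<in>v ` I. (\<lambda>T. u x * x T)) = 0" and "w \<in> v ` I"
    then obtain B where B: "B \<in> I" "w = v B" by blast
    obtain D \<mu> where D: "D \<noteq> 0" and \<mu>: "\<And>A. A \<in> I \<Longrightarrow> of_int D * u (v A) = of_int (\<mu> A)"
      using common_denominator[OF \<open>finite I\<close>, of "\<lambda>A. u (v A)"] by blast
    have "(\<Sum>A\<in>I. \<mu> A * M A S) = 0" if "S \<in> J" for S
    proof -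
      have "(\<Sum>A\<in>I. u (v A) * v A S) = 0"
        using fun_cong[OF sum, of S] by (simp add: sum_fun_apply sum.reindex[OF inj])
      then have "of_int D * (\<Sum>A\<in>I. u (v A) * of_int (M A S)) = 0"
        using that by (simp add: v_def)
      then have "of_int (\<Sum>A\<in>I. \<mu> A * M A S) = (0 :: rat)"
        by (simp add: sum_distrib_left mult.assoc[symmetric] \<mu> cong: sum.cong)
      then show ?thesis
        by (simp only: of_int_eq_0_iff)
    qed
    then have "\<mu> B = 0"
      using trivial B(1) by blast
    then show "u w = 0"
      using \<mu>[OF B(1)] D B(2) by simp
  qed (use \<open>finite I\<close> in simp)
  have "card I = card (v ` I)"
    using card_image[OF inj] ..
  also have "\<dots> \<le> card ((\<lambda>S T. of_bool (T = S) :: rat) ` J)"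
    using rat_fun.independent_span_bound[OF _ indep span] \<open>finite J\<close> by simp
  also have "\<dots> \<le> card J"
    by (rule card_image_le[OF \<open>finite J\<close>])
  finally show ?thesis .
qed

lemma card_le_if_gram_cong_identity:
  fixes M :: "'a \<Rightarrow> 'b \<Rightarrow> int" and w :: "'b \<Rightarrow> int" and m :: int
  assumes "\<not> is_unit m" "finite I" "finite J"
    and gram: "\<And>A B. A \<in> I \<Longrightarrow> B \<in> I \<Longrightarrow>
      [(\<Sum>S\<in>J. M A S * w S * M B S) = of_bool (A = B)] (mod m)"
  shows "card I \<le> card J"
proof (rule card_le_if_integer_relations_trivial[OF assms(2,3)])
  fix \<mu> assume "\<And>S. S \<in> J \<Longrightarrow> (\<Sum>A\<in>I. \<mu> A * M A S) = 0"
  then show "\<forall>A\<in>I. \<mu> A = 0"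
    using integer_relation_trivial[OF assms(1,2) _ gram] by blast
qed

lemma card_inter_mod_in_L_iff:
  assumes "L \<subseteq> {0..<q}" "modular_L_avoiding q L F" "modular_L_intersecting q L F"
    and "A \<in> F" "B \<in> F"
  shows "card (A \<inter> B) mod q \<in> L \<longleftrightarrow> A \<noteq> B"
proof
  assume "card (A \<inter> B) mod q \<in> L"
  with assms(2,4,5) show "A \<noteq> B"
    unfolding modular_L_avoiding_def by force
next
  assume "A \<noteq> B"
  with assms(3-5) obtain l where "l \<in> L" "card (A \<inter> B) mod q = l mod q"
    unfolding modular_L_intersecting_def by blast
  with assms(1) show "card (A \<inter> B) mod q \<in> L"
    by auto
qed

lemma modular_L_system_gram_cong:
  assumes "prime p" "L \<subseteq> {0..<p ^ k}" "F \<subseteq> Pow {1..n}"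
    and "modular_L_avoiding (p ^ k) L F" "modular_L_intersecting (p ^ k) L F"
    and "A \<in> F" "B \<in> F"
  defines "c \<equiv> newton_coeff (\<lambda>x. of_bool (x \<notin> L))"
  shows "[(\<Sum>S | S \<subseteq> {1..n} \<and> card S < p ^ k. of_bool (S \<subseteq> A) * c (card S) * of_bool (S \<subseteq> B))
    = of_bool (A = B)] (mod int p)"
proof -
  have "(\<Sum>S | S \<subseteq> {1..n} \<and> card S < p ^ k. of_bool (S \<subseteq> A) * c (card S) * of_bool (S \<subseteq> B))
      = (\<Sum>i<p ^ k. c i * int (card (A \<inter> B) choose i))"
    using assms(3,6) by (intro sum_inclusion_products_eq_sum_choose) auto
  also have "[\<dots> = of_bool (card (A \<inter> B) mod p ^ k \<notin> L)] (mod int p)"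
    unfolding c_def by (rule sum_newton_coeff_choose_cong[OF assms(1)])
  also have "card (A \<inter> B) mod p ^ k \<notin> L \<longleftrightarrow> A = B"
    using card_inter_mod_in_L_iff[OF assms(2,4-7)] by blast
  finally show ?thesis .
qed

theorem mainTheorem15:
  fixes q n :: nat and L :: "nat set" and F :: "nat set set"
  assumes "prime_power q"
    and "L \<subseteq> {0..<q}"
    and "F \<subseteq> Pow {1..n}"
    and "modular_L_avoiding q L F"
    and "modular_L_intersecting q L F"
  shows "card F \<le> (\<Sum>i=0..<q. n choose i)"
proof -
  obtain p k where p: "prime p" and q: "q = p ^ k"
    using assms(1) unfolding prime_power_def by blast
  have "finite F"
    using assms(3) by (rule finite_subset) simp
  then have "card F \<le> card {S. S \<subseteq> {1..n} \<and> card S < p ^ k}"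
    using p by (intro card_le_if_gram_cong_identity[OF _ _ _ modular_L_system_gram_cong[OF p assms(2-5)[unfolded q]]])
      auto
  also have "\<dots> = (\<Sum>i<p ^ k. n choose i)"
    by (simp add: card_subsets_card_less)
  finally show ?thesis
    by (simp add: q atLeast0LessThan)
qed

end
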